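(* Let $D$ be an integral domain of characteristic zero. Suppose that every $D$-algebra endomorphism $f$ of $D[x,y]$ with $\operatorname{Jac}(f(x),f(y))\in D^*$ is an automorphism of $D[x,y]$. Then for all $A,B,w\in D[x,y]$ with $\operatorname{Jac}(A,B)\in D^*$ and $\operatorname{Jac}(A,w)=0$, one has $w\in D[A]$.
   Context: $\operatorname{Jac}(u,v):=u_xv_y-u_yv_x$ for $u,v\in D[x,y]$. $D^*$ is the group of units of $D$. $D[A]$ is the $D$-subalgebra of $D[x,y]$ generated by $A$. *)

theory Defs
  imports "HOL-Computational_Algebra.Polynomial"
begin

text \<open>D[x,y] is represented as D[x][y], i.e. the type 'a poly poly:
 the outer variable is y, the inner variable is x.\<close>

definition const2 :: "'a::idom \<Rightarrow> 'a poly poly" where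
  "const2 c = [:[:c:]:]"

definition varX :: "'a::idom poly poly" where
  "varX = [:[:0, 1:]:]"

definition varY :: "'a::idom poly poly" where
  "varY = [:0, 1:]"

definition dx :: "'a::idom poly poly \<Rightarrow> 'a poly poly" where
  "dx u = map_poly pderiv u"

definition dy :: "'a::idom poly poly \<Rightarrow> 'a poly poly" where
  "dy u = pderiv u"

definition Jac :: "'a::idom poly poly \<Rightarrow> 'a poly poly \<Rightarrow> 'a poly poly" where
  "Jac u v = dx u * dy v - dy u * dx v"

definition is_Dunit :: "'a::idom poly poly \<Rightarrow> bool" where
  "is_Dunit p \<longleftrightarrow> (\<exists>c. (\<exists>d. c * d = 1) \<and> p = const2 c)"

definition D_alg_endo :: "('a::idom poly poly \<Rightarrow> 'a poly poly) \<Rightarrow> bool" where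
  "D_alg_endo f \<longleftrightarrow>
     (\<forall>p q. f (p + q) = f p + f q) \<and> (\<forall>p q. f (p * q) = f p * f q) \<and> f 1 = 1 \<and>
     (\<forall>c. f (const2 c) = const2 c)"

definition D_alg_auto :: "('a::idom poly poly \<Rightarrow> 'a poly poly) \<Rightarrow> bool" where
  "D_alg_auto f \<longleftrightarrow> D_alg_endo f \<and> bij f"

inductive_set Dalg_gen :: "'a::idom poly poly set \<Rightarrow> 'a poly poly set"
  for S :: "'a poly poly set" where
  const: "const2 c \<in> Dalg_gen S"
| gen: "a \<in> S \<Longrightarrow> a \<in> Dalg_gen S"
| add: "p \<in> Dalg_gen S \<Longrightarrow> q \<in> Dalg_gen S \<Longrightarrow> p + q \<in> Dalg_gen S"
| mult: "p \<in> Dalg_gen S \<Longrightarrow> q \<in> Dalg_gen S \<Longrightarrow> p * q \<in> Dalg_gen S"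

end

theory Submission
  imports Defs
begin

text \<open>Let \<open>\<phi>\<close> be the substitution \<open>x \<mapsto> A, y \<mapsto> B\<close>. It is a \<open>D\<close>-algebra endomorphism of
  \<open>D[x,y]\<close> with Jacobian \<open>Jac(A,B) \<in> D\<^sup>*\<close>, hence by hypothesis an automorphism, so \<open>w = \<phi>(v)\<close>
  for some \<open>v\<close>. The chain rule gives \<open>Jac(A, \<phi>(v)) = \<phi>(\<partial>\<^sub>y v) \<cdot> Jac(A,B)\<close>, so \<open>\<phi>(\<partial>\<^sub>y v) = 0\<close>
  and, \<open>\<phi>\<close> being injective, \<open>\<partial>\<^sub>y v = 0\<close>. In characteristic zero this forces \<open>v \<in> D[x]\<close>,
  whence \<open>w = v(A) \<in> D[A]\<close>.\<close>

definition is_ring_hom :: "('b::comm_ring_1 \<Rightarrow> 'c::comm_ring_1) \<Rightarrow> bool" where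
  "is_ring_hom h \<longleftrightarrow>
     h 0 = 0 \<and> h 1 = 1 \<and> (\<forall>x y. h (x + y) = h x + h y) \<and> (\<forall>x y. h (x * y) = h x * h y)"

lemma map_poly_add_hom:
  fixes h :: "'b::comm_semiring_0 \<Rightarrow> 'c::comm_semiring_0"
  assumes "h 0 = 0" and "\<And>x y. h (x + y) = h x + h y"
  shows "map_poly h (p + q) = map_poly h p + map_poly h q"
  by (intro poly_eqI) (simp add: coeff_map_poly assms)

lemma map_poly_mult_hom:
  fixes h :: "'b::comm_semiring_0 \<Rightarrow> 'c::comm_semiring_0"
  assumes h0: "h 0 = 0" and h_add: "\<And>x y. h (x + y) = h x + h y"
    and h_mult: "\<And>x y. h (x * y) = h x * h y"
  shows "map_poly h (p * q) = map_poly h p * map_poly h q"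
proof (intro poly_eqI)
  fix n
  have "h (\<Sum>i\<le>n. coeff p i * coeff q (n - i)) = (\<Sum>i\<le>n. h (coeff p i * coeff q (n - i)))"
    using sum_comp_morphism[of h, OF h0 h_add, symmetric] by (simp add: o_def)
  then show "coeff (map_poly h (p * q)) n = coeff (map_poly h p * map_poly h q) n"
    by (simp add: coeff_map_poly h0 coeff_mult h_mult)
qed

lemma is_ring_hom_poly_map_poly:
  assumes "is_ring_hom h"
  shows "is_ring_hom (\<lambda>p. poly (map_poly h p) a)"
  using assms unfolding is_ring_hom_def by (auto simp: map_poly_add_hom map_poly_mult_hom)

lemma is_ring_hom_const2: "is_ring_hom (const2 :: 'a::idom \<Rightarrow> _)"
  unfolding is_ring_hom_def const2_def by (auto simp: one_pCons)

definition subst_x :: "'a::idom poly poly \<Rightarrow> 'a poly \<Rightarrow> 'a poly poly" where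
  "subst_x A p = poly (map_poly const2 p) A"

definition subst_xy :: "'a::idom poly poly \<Rightarrow> 'a poly poly \<Rightarrow> 'a poly poly \<Rightarrow> 'a poly poly" where
  "subst_xy A B u = poly (map_poly (subst_x A) u) B"

lemma is_ring_hom_subst_x: "is_ring_hom (subst_x A)"
  unfolding subst_x_def[abs_def] by (rule is_ring_hom_poly_map_poly[OF is_ring_hom_const2])

lemma is_ring_hom_subst_xy: "is_ring_hom (subst_xy A B)"
  unfolding subst_xy_def[abs_def] by (rule is_ring_hom_poly_map_poly[OF is_ring_hom_subst_x])

lemma subst_x_0 [simp]: "subst_x A 0 = 0"
  by (simp add: subst_x_def)

lemma subst_x_pCons: "subst_x A (pCons c p) = const2 c + A * subst_x A p"
  by (simp add: subst_x_def map_poly_pCons const2_def)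

lemma subst_xy_0 [simp]: "subst_xy A B 0 = 0"
  by (simp add: subst_xy_def)

lemma subst_xy_pCons: "subst_xy A B (pCons p u) = subst_x A p + B * subst_xy A B u"
  by (simp add: subst_xy_def map_poly_pCons)

lemma subst_xy_pCons_0: "subst_xy A B [:p:] = subst_x A p"
  by (simp add: subst_xy_pCons)

lemma subst_xy_const2: "subst_xy A B (const2 c) = const2 c"
  by (simp add: const2_def subst_xy_pCons subst_x_pCons)

lemma subst_xy_varX: "subst_xy A B varX = A"
  using is_ring_hom_subst_x[of A]
  by (simp add: varX_def subst_xy_pCons subst_x_pCons const2_def one_pCons[symmetric] is_ring_hom_def)

lemma subst_xy_varY: "subst_xy A B varY = B"
  using is_ring_hom_subst_x[of A]
  by (simp add: varY_def subst_xy_pCons is_ring_hom_def)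

lemma D_alg_endo_subst_xy: "D_alg_endo (subst_xy A B)"
  using is_ring_hom_subst_xy[of A B]
  unfolding D_alg_endo_def is_ring_hom_def by (simp add: subst_xy_const2)

lemma subst_x_in_Dalg_gen: "subst_x A p \<in> Dalg_gen {A}"
proof (induction p)
  case 0
  then show ?case using Dalg_gen.const[of 0 "{A}"] by (simp add: const2_def)
next
  case (pCons c p)
  then show ?case by (simp add: subst_x_pCons Dalg_gen.intros)
qed

definition is_derivation :: "('a::idom poly poly \<Rightarrow> 'a poly poly) \<Rightarrow> bool" where
  "is_derivation d \<longleftrightarrow>
     (\<forall>u v. d (u + v) = d u + d v) \<and> (\<forall>u v. d (u * v) = d u * v + u * d v) \<and>
     (\<forall>c. d (const2 c) = 0)"

lemma derivation_0: "is_derivation d \<Longrightarrow> d 0 = 0"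
  unfolding is_derivation_def by (metis add_cancel_right_right add_0)

lemma derivation_subst_x:
  assumes d: "is_derivation d"
  shows "d (subst_x A p) = subst_x A (pderiv p) * d A"
proof (induction p)
  case 0
  then show ?case using derivation_0[OF d] by simp
next
  case (pCons c p)
  have "d (subst_x A (pCons c p)) = (subst_x A p + A * subst_x A (pderiv p)) * d A"
    using d pCons.IH unfolding is_derivation_def by (simp add: subst_x_pCons algebra_simps)
  also have "subst_x A p + A * subst_x A (pderiv p) = subst_x A (pderiv (pCons c p))"
    using is_ring_hom_subst_x[of A]
    by (simp add: pderiv_pCons subst_x_pCons const2_def is_ring_hom_def)
  finally show ?case .
qed

lemma dx_pCons: "dx (pCons p u) = pCons (pderiv p) (dx u)"
  by (simp add: dx_def map_poly_pCons)

lemma derivation_subst_xy: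
  assumes d: "is_derivation d"
  shows "d (subst_xy A B u) = subst_xy A B (dx u) * d A + subst_xy A B (dy u) * d B"
proof (induction u)
  case 0
  then show ?case using derivation_0[OF d] by (simp add: dx_def dy_def)
next
  case (pCons p u)
  have "d (subst_xy A B (pCons p u)) =
      (subst_x A (pderiv p) + B * subst_xy A B (dx u)) * d A
      + (subst_xy A B u + B * subst_xy A B (dy u)) * d B"
    using d derivation_subst_x[OF d] pCons.IH
    unfolding is_derivation_def by (simp add: subst_xy_pCons algebra_simps)
  also have "\<dots> = subst_xy A B (dx (pCons p u)) * d A + subst_xy A B (dy (pCons p u)) * d B"
    using is_ring_hom_subst_xy[of A B]
    by (simp add: dx_pCons dy_def pderiv_pCons subst_xy_pCons is_ring_hom_def)
  finally show ?case .
qed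

lemma derivation_dy: "is_derivation dy"
  unfolding is_derivation_def dy_def
  by (auto simp: pderiv_add pderiv_mult const2_def pderiv_pCons algebra_simps)

lemma dx_mult: "dx (u * v) = dx u * v + u * dx v"
proof -
  have pderiv_sum: "pderiv (sum f S) = (\<Sum>x\<in>S. pderiv (f x))" for f and S :: "nat set"
    using higher_pderiv_sum[of 1] by simp
  have product_rule: "pderiv (p * q) = pderiv p * q + p * pderiv q" for p q :: "'a poly"
    by (simp add: pderiv_mult)
  show ?thesis
    by (rule poly_eqI)
      (simp add: dx_def coeff_map_poly coeff_mult pderiv_sum product_rule sum.distrib)
qed

lemma derivation_dx: "is_derivation dx"
  unfolding is_derivation_def
  by (simp add: dx_mult) (simp add: dx_def map_poly_add_hom pderiv_add const2_def map_poly_pCons)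

lemma Jac_subst_xy: "Jac A (subst_xy A B u) = subst_xy A B (dy u) * Jac A B"
  unfolding Jac_def derivation_subst_xy[OF derivation_dx] derivation_subst_xy[OF derivation_dy]
  by (simp add: algebra_simps)

lemma dy_eq_0_imp_const:
  fixes u :: "'a::{idom, ring_char_0} poly poly"
  assumes "dy u = 0"
  shows "u = [:coeff u 0:]"
  using assms by (simp add: dy_def pderiv_eq_0_iff) (metis degree_0_id)

theorem theorem3p5:
  fixes D_witness :: "'a::{idom, ring_char_0} itself"
  assumes JC: "\<And>f :: 'a poly poly \<Rightarrow> 'a poly poly.
                 D_alg_endo f \<Longrightarrow> is_Dunit (Jac (f varX) (f varY)) \<Longrightarrow> D_alg_auto f"
  shows "\<forall>A B w :: 'a poly poly. is_Dunit (Jac A B) \<and> Jac A w = 0 \<longrightarrow> w \<in> Dalg_gen {A}"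
proof (intro allI impI, elim conjE)
  fix A B w :: "'a poly poly"
  assume unit: "is_Dunit (Jac A B)" and "Jac A w = 0"
  let ?\<phi> = "subst_xy A B"
  have "bij ?\<phi>"
    using JC[OF D_alg_endo_subst_xy] unit by (simp add: subst_xy_varX subst_xy_varY D_alg_auto_def)
  then obtain v where w: "w = ?\<phi> v" by (metis bij_pointE)
  have "Jac A B \<noteq> 0"
    using unit by (auto simp: is_Dunit_def const2_def)
  with \<open>Jac A w = 0\<close> have "?\<phi> (dy v) = ?\<phi> 0"
    by (simp add: w Jac_subst_xy)
  with \<open>bij ?\<phi>\<close> have "dy v = 0" by (meson bij_is_inj injD)
  then have "v = [:coeff v 0:]" by (rule dy_eq_0_imp_const)
  then have "w = subst_x A (coeff v 0)" using w by (metis subst_xy_pCons_0)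
  then show "w \<in> Dalg_gen {A}" by (simp add: subst_x_in_Dalg_gen)
qed

end
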